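(* Let $x\in\mathbb X$ and $B\Subset\mathbb X$. Then \[ \prod_{Y\in\mathbf F(x)}\max\Big\{|W(Y\mid B)|,\ 1+|W(Y\mid B)-1|\alpha^S\ \Big|\ \varnothing\neq S\subset Y\setminus\{x\}\Big\} \le\mathbf 1_{\{x\notin B\}}\prod_{X\in\mathbf F(x)}\max\Big\{|W(X)|,\ 1+|W(X)-1|\alpha^S\ \Big|\ \varnothing\neq S\subset X\setminus\{x\}\Big\}. \]
   Context: $\mathbb X$ is a finite or countably infinite set; $X\Subset\mathbb X$ means finite subset; $\mathbf F$ is the set of finite subsets of $\mathbb X$ and $\mathbf F(x)=\{X\Subset\mathbb X\mid x\in X\}$. Fix $W:\mathbf F\to\mathbb C$, $r:\mathbb X\to[0,1)$, $\alpha=\frac r{1-r}$, and write $\alpha^S=\prod_{s\in S}\alpha(s)$. The conditional interaction is $W(X\mid B)=\prod_{C\subset B}W(X\cup C)$ if $X\cap B=\varnothing$, $W(X\mid B)=0$ if $X=\{y\}$ with $y\in B$, and $W(X\mid B)=1$ otherwise. A maximum $\max\{a,\ b_S\mid S\in\mathcal S\}$ denotes the maximum of $a$ together with all $b_S$, $S\in\mathcal S$ (it equals $a$ if $\mathcal S=\varnothing$). Products of nonnegative numbers over infinite index sets are understood in $[0,\infty]$. *)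

theory Defs
  imports "HOL-Analysis.Analysis"
begin

definition eprod :: "('i \<Rightarrow> ennreal) \<Rightarrow> 'i set \<Rightarrow> ennreal" where
  "eprod f I = Lim (finite_subsets_at_top I) (\<lambda>F. \<Prod>i\<in>F. f i)"

definition Fx :: "'a \<Rightarrow> 'a set set" where
  "Fx x = {X. finite X \<and> x \<in> X}"

definition alpha :: "('a \<Rightarrow> real) \<Rightarrow> 'a \<Rightarrow> real" where
  "alpha r s = r s / (1 - r s)"

definition alpha_pow :: "('a \<Rightarrow> real) \<Rightarrow> 'a set \<Rightarrow> real" where
  "alpha_pow r S = (\<Prod>s\<in>S. alpha r s)"

definition condW :: "('a set \<Rightarrow> complex) \<Rightarrow> 'a set \<Rightarrow> 'a set \<Rightarrow> complex" where
  "condW W X B =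
     (if X \<inter> B = {} then (\<Prod>C\<in>Pow B. W (X \<union> C))
      else if (\<exists>y. X = {y} \<and> y \<in> B) then 0
      else 1)"

definition maxfac :: "('a \<Rightarrow> real) \<Rightarrow> complex \<Rightarrow> 'a set \<Rightarrow> 'a \<Rightarrow> real" where
  "maxfac r w X x =
     Max (insert (cmod w) {1 + cmod (w - 1) * alpha_pow r S | S. S \<noteq> {} \<and> S \<subseteq> X - {x}})"

end

theory Submission
  imports Defs
begin

text \<open>The factor \<open>max{|w|, 1 + |w - 1| \<alpha>\<^sup>S | \<dots>}\<close> is submultiplicative in \<open>w\<close> and
  increasing in the set, so for \<open>Y \<in> F(x)\<close> disjoint from \<open>B\<close> the factor of
  \<open>W(Y | B) = \<Prod>\<^sub>C\<^sub>\<subseteq>\<^sub>B W(Y \<union> C)\<close> is bounded by the product of the factors of \<open>W\<close> at the sets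
  \<open>Y \<union> C\<close>. Each \<open>X \<in> F(x)\<close> arises as \<open>Y \<union> C\<close> from at most one such pair, and for \<open>x \<notin> B\<close>
  the factors at sets meeting \<open>B\<close> equal 1. All factors except the one at \<open>{x}\<close> are at
  least 1, so both infinite products are suprema of finite partial products and the
  finite comparison passes to the limit. If \<open>x \<in> B\<close>, the factor at \<open>{x}\<close> vanishes.\<close>

lemma eprod_eq_0:
  fixes f :: "'i \<Rightarrow> ennreal"
  assumes "i0 \<in> I" and "f i0 = 0"
  shows "eprod f I = 0"
proof -
  have "\<forall>\<^sub>F F in finite_subsets_at_top I. prod f F = 0"
    unfolding eventually_finite_subsets_at_top
    using assms by (intro exI[of _ "{i0}"]) (auto intro: prod_zero)
  then have "(prod f \<longlongrightarrow> 0) (finite_subsets_at_top I)"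
    by (rule tendsto_eventually)
  then show ?thesis
    unfolding eprod_def by (intro tendsto_Lim) auto
qed

lemma eprod_eq_SUP:
  fixes f :: "'i \<Rightarrow> ennreal"
  assumes i0: "i0 \<in> I" and ge_1: "\<And>i. i \<in> I \<Longrightarrow> i \<noteq> i0 \<Longrightarrow> 1 \<le> f i"
  shows "eprod f I = (SUP F\<in>{F. finite F \<and> i0 \<in> F \<and> F \<subseteq> I}. prod f F)"
proof -
  define L where "L = (SUP F\<in>{F. finite F \<and> i0 \<in> F \<and> F \<subseteq> I}. prod f F)"
  have mono: "prod f F \<le> prod f G" if "finite G" "i0 \<in> F" "F \<subseteq> G" "G \<subseteq> I" for F G
  proof -
    have "prod f G = prod f (G - F) * prod f F"
      using that by (intro prod.subset_diff) auto
    moreover have "1 \<le> prod f (G - F)"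
      using that ge_1 by (intro prod_ge_1) auto
    ultimately show ?thesis
      by (metis mult_1 mult_right_mono zero_le)
  qed
  have "(prod f \<longlongrightarrow> L) (finite_subsets_at_top I)"
  proof (rule increasing_tendsto)
    show "\<forall>\<^sub>F F in finite_subsets_at_top I. prod f F \<le> L"
      unfolding eventually_finite_subsets_at_top L_def
      using i0 by (intro exI[of _ "{i0}"]) (auto intro: SUP_upper)
    fix y assume "y < L"
    then obtain F0 where F0: "finite F0" "i0 \<in> F0" "F0 \<subseteq> I" "y < prod f F0"
      unfolding L_def less_SUP_iff by auto
    then show "\<forall>\<^sub>F F in finite_subsets_at_top I. y < prod f F"
      unfolding eventually_finite_subsets_at_top
      using mono by (intro exI[of _ F0]) (auto intro: less_le_trans)
  qed
  then show ?thesis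
    unfolding eprod_def L_def by (intro tendsto_Lim) auto
qed

lemma eprod_le_eprod:
  fixes f :: "'i \<Rightarrow> ennreal" and g :: "'j \<Rightarrow> ennreal"
  assumes "i0 \<in> I" "\<And>i. i \<in> I \<Longrightarrow> i \<noteq> i0 \<Longrightarrow> 1 \<le> f i"
    and "j0 \<in> J" "\<And>j. j \<in> J \<Longrightarrow> j \<noteq> j0 \<Longrightarrow> 1 \<le> g j"
    and "\<And>F. finite F \<Longrightarrow> i0 \<in> F \<Longrightarrow> F \<subseteq> I \<Longrightarrow>
           \<exists>G. finite G \<and> j0 \<in> G \<and> G \<subseteq> J \<and> prod f F \<le> prod g G"
  shows "eprod f I \<le> eprod g J"
proof -
  have "(SUP F\<in>{F. finite F \<and> i0 \<in> F \<and> F \<subseteq> I}. prod f F)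
      \<le> (SUP G\<in>{G. finite G \<and> j0 \<in> G \<and> G \<subseteq> J}. prod g G)"
    by (rule SUP_least) (use assms(5) in \<open>blast intro: SUP_upper2\<close>)
  then show ?thesis
    using eprod_eq_SUP[OF assms(1,2)] eprod_eq_SUP[OF assms(3,4)] by simp
qed

lemma finite_maxfac_terms:
  "finite {1 + cmod (w - 1) * alpha_pow r S | S. S \<noteq> {} \<and> S \<subseteq> X - {x}}" if "finite X"
proof -
  have "{1 + cmod (w - 1) * alpha_pow r S | S. S \<noteq> {} \<and> S \<subseteq> X - {x}}
     \<subseteq> (\<lambda>S. 1 + cmod (w - 1) * alpha_pow r S) ` Pow (X - {x})"
    by auto
  then show ?thesis
    using that by (meson finite_Diff finite_Pow_iff finite_imageI finite_subset)
qed

lemma norm_le_maxfac: "finite X \<Longrightarrow> cmod w \<le> maxfac r w X x"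
  unfolding maxfac_def using finite_maxfac_terms by (intro Max_ge) auto

lemma maxfac_nonneg: "finite X \<Longrightarrow> 0 \<le> maxfac r w X x"
  by (rule order_trans[OF norm_ge_zero norm_le_maxfac])

lemma alpha_term_le_maxfac:
  "finite X \<Longrightarrow> S \<noteq> {} \<Longrightarrow> S \<subseteq> X - {x} \<Longrightarrow> 1 + cmod (w - 1) * alpha_pow r S \<le> maxfac r w X x"
  unfolding maxfac_def using finite_maxfac_terms by (intro Max_ge) auto

lemma maxfac_leI:
  assumes "finite X" "cmod w \<le> M"
    and "\<And>S. S \<noteq> {} \<Longrightarrow> S \<subseteq> X - {x} \<Longrightarrow> 1 + cmod (w - 1) * alpha_pow r S \<le> M"
  shows "maxfac r w X x \<le> M"
  unfolding maxfac_def using assms finite_maxfac_terms by (subst Max_le_iff) auto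

lemma maxfac_mono:
  assumes "finite X'" "X \<subseteq> X'"
  shows "maxfac r w X x \<le> maxfac r w X' x"
proof (rule maxfac_leI)
  show "finite X" using assms finite_subset by blast
  show "cmod w \<le> maxfac r w X' x" using assms(1) by (rule norm_le_maxfac)
  show "1 + cmod (w - 1) * alpha_pow r S \<le> maxfac r w X' x" if "S \<noteq> {}" "S \<subseteq> X - {x}" for S
    using that assms by (intro alpha_term_le_maxfac) auto
qed

lemma maxfac_1:
  assumes "finite X"
  shows "maxfac r 1 X x = 1"
proof (rule antisym)
  show "maxfac r 1 X x \<le> 1" using assms by (rule maxfac_leI) auto
  show "1 \<le> maxfac r 1 X x" using norm_le_maxfac[OF assms, of 1 r x] by simp
qed

lemma maxfac_0_singleton: "maxfac r 0 {x} x = 0"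
  by (simp add: maxfac_def)

lemma alpha_pow_nonneg:
  assumes "\<And>s. s \<in> S \<Longrightarrow> 0 \<le> r s \<and> r s < 1"
  shows "0 \<le> alpha_pow r S"
  unfolding alpha_pow_def alpha_def using assms by (intro prod_nonneg divide_nonneg_nonneg) force+

lemma one_le_maxfac:
  assumes r: "\<And>s. 0 \<le> r s \<and> r s < 1" and "finite X" "X - {x} \<noteq> {}"
  shows "1 \<le> maxfac r w X x"
proof -
  have "0 \<le> cmod (w - 1) * alpha_pow r (X - {x})"
    using alpha_pow_nonneg[of "X - {x}" r] r by simp
  also have "1 + \<dots> \<le> maxfac r w X x"
    using assms by (intro alpha_term_le_maxfac) auto
  finally show ?thesis by simp
qed

lemma maxfac_mult:
  assumes r: "\<And>s. 0 \<le> r s \<and> r s < 1" and X: "finite X"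
  shows "maxfac r (w1 * w2) X x \<le> maxfac r w1 X x * maxfac r w2 X x"
proof (rule maxfac_leI[OF X])
  let ?M1 = "maxfac r w1 X x" and ?M2 = "maxfac r w2 X x"
  have norm1: "cmod w1 \<le> ?M1" and norm2: "cmod w2 \<le> ?M2"
    using X by (auto intro: norm_le_maxfac)
  have M1_nonneg: "0 \<le> ?M1" using X by (rule maxfac_nonneg)
  show "cmod (w1 * w2) \<le> ?M1 * ?M2"
    unfolding norm_mult using norm1 norm2 M1_nonneg by (intro mult_mono) auto
  fix S assume S: "S \<noteq> {}" "S \<subseteq> X - {x}"
  define a where "a = alpha_pow r S"
  have a_nonneg: "0 \<le> a" unfolding a_def using r by (intro alpha_pow_nonneg) auto
  have term1: "1 + cmod (w1 - 1) * a \<le> ?M1" and term2: "1 + cmod (w2 - 1) * a \<le> ?M2"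
    unfolding a_def using S X by (auto intro!: alpha_term_le_maxfac)
  have "w1 * w2 - 1 = w1 * (w2 - 1) + (w1 - 1)" by (simp add: algebra_simps)
  then have "cmod (w1 * w2 - 1) \<le> cmod w1 * cmod (w2 - 1) + cmod (w1 - 1)"
    by (metis norm_mult norm_triangle_ineq)
  then have "cmod (w1 * w2 - 1) * a \<le> (cmod w1 * cmod (w2 - 1) + cmod (w1 - 1)) * a"
    using a_nonneg by (rule mult_right_mono)
  then have "1 + cmod (w1 * w2 - 1) * a \<le> (1 + cmod (w1 - 1) * a) + cmod w1 * (cmod (w2 - 1) * a)"
    by (simp add: algebra_simps)
  also have "\<dots> \<le> ?M1 + ?M1 * (cmod (w2 - 1) * a)"
    using term1 norm1 a_nonneg by (intro add_mono mult_right_mono) auto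
  also have "\<dots> = ?M1 * (1 + cmod (w2 - 1) * a)" by (simp add: algebra_simps)
  also have "\<dots> \<le> ?M1 * ?M2"
    using term2 M1_nonneg by (rule mult_left_mono)
  finally show "1 + cmod (w1 * w2 - 1) * alpha_pow r S \<le> ?M1 * ?M2" by (simp add: a_def)
qed

lemma maxfac_prod:
  assumes r: "\<And>s. 0 \<le> r s \<and> r s < 1" and X: "finite X"
  shows "maxfac r (\<Prod>i\<in>A. w i) X x \<le> (\<Prod>i\<in>A. maxfac r (w i) X x)"
proof (induction A rule: infinite_finite_induct)
  case (insert a A)
  have "maxfac r (\<Prod>i\<in>insert a A. w i) X x \<le> maxfac r (w a) X x * maxfac r (\<Prod>i\<in>A. w i) X x"
    using insert.hyps maxfac_mult[OF r X] by simp
  also have "\<dots> \<le> maxfac r (w a) X x * (\<Prod>i\<in>A. maxfac r (w i) X x)"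
    using insert.IH maxfac_nonneg[OF X] by (rule mult_left_mono)
  finally show ?case using insert.hyps by simp
qed (simp_all add: maxfac_1[OF X])

lemma condW_disjoint: "X \<inter> B = {} \<Longrightarrow> condW W X B = (\<Prod>C\<in>Pow B. W (X \<union> C))"
  by (simp add: condW_def)

lemma condW_singleton: "y \<in> B \<Longrightarrow> condW W {y} B = 0"
  by (simp add: condW_def)

lemma condW_eq_1: "X \<inter> B \<noteq> {} \<Longrightarrow> x \<in> X \<Longrightarrow> x \<notin> B \<Longrightarrow> condW W X B = 1"
  unfolding condW_def by auto

lemma maxfac_condW_le:
  assumes r: "\<And>s. 0 \<le> r s \<and> r s < 1" and "finite B" "finite Y" "Y \<inter> B = {}"
  shows "maxfac r (condW W Y B) Y x \<le> (\<Prod>C\<in>Pow B. maxfac r (W (Y \<union> C)) (Y \<union> C) x)"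
proof -
  have "maxfac r (condW W Y B) Y x \<le> (\<Prod>C\<in>Pow B. maxfac r (W (Y \<union> C)) Y x)"
    unfolding condW_disjoint[OF assms(4)] using r assms(3) by (rule maxfac_prod)
  also have "\<dots> \<le> (\<Prod>C\<in>Pow B. maxfac r (W (Y \<union> C)) (Y \<union> C) x)"
    using assms(2,3) by (intro prod_mono conjI maxfac_nonneg maxfac_mono) (auto intro: finite_subset)
  finally show ?thesis .
qed

lemma prod_maxfac_condW_le:
  assumes r: "\<And>s. 0 \<le> r s \<and> r s < 1" and B: "finite B" "x \<notin> B"
    and F: "finite F" "F \<subseteq> Fx x"
  shows "(\<Prod>Y\<in>F. maxfac r (condW W Y B) Y x)
    \<le> (\<Prod>X\<in>(\<lambda>(Y, C). Y \<union> C) ` ({Y\<in>F. Y \<inter> B = {}} \<times> Pow B). maxfac r (W X) X x)"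
proof -
  define D where "D = {Y\<in>F. Y \<inter> B = {}}"
  have finite_Y: "finite Y" if "Y \<in> F" for Y
    using that F by (auto simp: Fx_def)
  have "(\<Prod>Y\<in>F. maxfac r (condW W Y B) Y x) = (\<Prod>Y\<in>D. maxfac r (condW W Y B) Y x)"
  proof (rule prod.mono_neutral_right[OF F(1)])
    show "\<forall>Y\<in>F - D. maxfac r (condW W Y B) Y x = 1"
    proof
      fix Y assume "Y \<in> F - D"
      then have "Y \<inter> B \<noteq> {}" "x \<in> Y" "finite Y"
        using F by (auto simp: D_def Fx_def)
      then show "maxfac r (condW W Y B) Y x = 1"
        using B(2) by (simp add: condW_eq_1 maxfac_1)
    qed
  qed (auto simp: D_def)
  also have "\<dots> \<le> (\<Prod>Y\<in>D. \<Prod>C\<in>Pow B. maxfac r (W (Y \<union> C)) (Y \<union> C) x)"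
    using r B finite_Y
    by (intro prod_mono conjI maxfac_nonneg maxfac_condW_le) (auto simp: D_def)
  also have "\<dots> = (\<Prod>(Y, C)\<in>D \<times> Pow B. maxfac r (W (Y \<union> C)) (Y \<union> C) x)"
    by (rule prod.cartesian_product)
  also have "\<dots> = (\<Prod>X\<in>(\<lambda>(Y, C). Y \<union> C) ` (D \<times> Pow B). maxfac r (W X) X x)"
  proof -
    have "inj_on (\<lambda>(Y, C). Y \<union> C) (D \<times> Pow B)"
      by (rule inj_onI) (auto simp: D_def)
    then show ?thesis
      by (simp add: prod.reindex case_prod_unfold)
  qed
  finally show ?thesis by (simp add: D_def)
qed

lemma one_le_ennreal_maxfac:
  assumes r: "\<And>s. 0 \<le> r s \<and> r s < 1" and "X \<in> Fx x" "X \<noteq> {x}"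
  shows "1 \<le> ennreal (maxfac r w X x)"
proof -
  have "finite X" "X - {x} \<noteq> {}"
    using assms(2,3) by (auto simp: Fx_def)
  then have "1 \<le> maxfac r w X x"
    by (rule one_le_maxfac[OF r])
  then show ?thesis
    using ennreal_leI by fastforce
qed

lemma prod_maxfac_condW_dominated:
  assumes r: "\<And>s. 0 \<le> r s \<and> r s < 1" and B: "finite B" "x \<notin> B"
    and F: "finite F" "{x} \<in> F" "F \<subseteq> Fx x"
  shows "\<exists>G. finite G \<and> {x} \<in> G \<and> G \<subseteq> Fx x \<and>
    (\<Prod>Y\<in>F. ennreal (maxfac r (condW W Y B) Y x)) \<le> (\<Prod>X\<in>G. ennreal (maxfac r (W X) X x))"
proof (intro exI conjI)
  define G where "G = (\<lambda>(Y, C). Y \<union> C) ` ({Y\<in>F. Y \<inter> B = {}} \<times> Pow B)"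
  show "{x} \<in> G"
    using F B unfolding G_def by (auto intro!: image_eqI[of _ _ "({x}, {})"])
  show "finite G" "G \<subseteq> Fx x"
    using F B by (auto simp: G_def Fx_def intro: finite_subset)
  have "(\<Prod>Y\<in>F. maxfac r (condW W Y B) Y x) \<le> (\<Prod>X\<in>G. maxfac r (W X) X x)"
    unfolding G_def by (rule prod_maxfac_condW_le[OF r B F(1,3)])
  moreover have "(\<Prod>Y\<in>F. ennreal (maxfac r (condW W Y B) Y x))
      = ennreal (\<Prod>Y\<in>F. maxfac r (condW W Y B) Y x)"
    using F by (intro prod_ennreal maxfac_nonneg) (auto simp: Fx_def)
  moreover have "(\<Prod>X\<in>G. ennreal (maxfac r (W X) X x)) = ennreal (\<Prod>X\<in>G. maxfac r (W X) X x)"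
    using \<open>G \<subseteq> Fx x\<close> by (intro prod_ennreal maxfac_nonneg) (auto simp: Fx_def)
  ultimately show "(\<Prod>Y\<in>F. ennreal (maxfac r (condW W Y B) Y x)) \<le> (\<Prod>X\<in>G. ennreal (maxfac r (W X) X x))"
    by (simp add: ennreal_leI)
qed

theorem corollary4p7:
  fixes W :: "'a::countable set \<Rightarrow> complex"
    and r :: "'a \<Rightarrow> real"
    and x :: 'a
    and B :: "'a set"
  assumes r_range: "\<And>s. 0 \<le> r s \<and> r s < 1"
    and B_fin: "finite B"
  shows "eprod (\<lambda>Y. ennreal (maxfac r (condW W Y B) Y x)) (Fx x)
         \<le> (if x \<notin> B then 1 else 0) * eprod (\<lambda>X. ennreal (maxfac r (W X) X x)) (Fx x)"
proof (cases "x \<in> B")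
  case True
  have "eprod (\<lambda>Y. ennreal (maxfac r (condW W Y B) Y x)) (Fx x) = 0"
    using True by (intro eprod_eq_0[of "{x}"]) (simp_all add: Fx_def condW_singleton maxfac_0_singleton)
  then show ?thesis by simp
next
  case False
  have "eprod (\<lambda>Y. ennreal (maxfac r (condW W Y B) Y x)) (Fx x)
      \<le> eprod (\<lambda>X. ennreal (maxfac r (W X) X x)) (Fx x)"
  proof (rule eprod_le_eprod)
    show "{x} \<in> Fx x" "{x} \<in> Fx x" by (simp_all add: Fx_def)
    show "\<exists>G. finite G \<and> {x} \<in> G \<and> G \<subseteq> Fx x \<and>
      (\<Prod>Y\<in>F. ennreal (maxfac r (condW W Y B) Y x)) \<le> (\<Prod>X\<in>G. ennreal (maxfac r (W X) X x))"
      if "finite F" "{x} \<in> F" "F \<subseteq> Fx x" for F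
      by (rule prod_maxfac_condW_dominated[where r = r, OF r_range B_fin False that])
    show "1 \<le> ennreal (maxfac r (condW W Y B) Y x)" if "Y \<in> Fx x" "Y \<noteq> {x}" for Y
      by (rule one_le_ennreal_maxfac[where r = r, OF r_range that])
    show "1 \<le> ennreal (maxfac r (W X) X x)" if "X \<in> Fx x" "X \<noteq> {x}" for X
      by (rule one_le_ennreal_maxfac[where r = r, OF r_range that])
  qed
  then show ?thesis using False by simp
qed

end
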